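(* Let $\mathcal{P}$ be a polyomino, $\mathbb{K}$ a field, $S=\mathbb{K}[x_v\mid v\in V(\mathcal{P})]$, $I_{\mathcal{P}}$ the polyomino ideal and $\mathbb{K}[\mathcal{P}]=S/I_{\mathcal{P}}$. Suppose $\mathcal{W}:I_1,\dots,I_\ell$ is a zig-zag walk of $\mathcal{P}$ with corners $v_i,z_i,u_i,v_{i+1}$ of $I_i$ as in the definition of zig-zag walk. Then $x_{v_1},\dots,x_{v_\ell}$ and $$f_{\mathcal{W}}=\prod_{k=1}^{\ell}x_{z_k}-\prod_{j=1}^{\ell}x_{u_j}$$ are zerodivisors of $\mathbb{K}[\mathcal{P}]$, with $x_{v_i}f_{\mathcal{W}}\in I_{\mathcal{P}}$ for $i=1,\dots,\ell$.
   Context: For $a\in\mathbb{N}^2$ the cell $[a,a+(1,1)]$ has vertices $a,a+(1,0),a+(0,1),a+(1,1)$ and four edges. A polyomino $\mathcal{P}$ is a finite nonempty set of cells such that any two cells are joined by a sequence of cells of $\mathcal{P}$, consecutive ones sharing an edge. $V(\mathcal{P})$ is the union of the vertex sets of its cells. For $a=(i,j)$, $b=(k,\ell)$ with $i<k$, $j<\ell$, the interval $[a,b]=\{(p,q): i\le p\le k,\ j\le q\le\ell\}$ has diagonal corners $a,b$ and anti-diagonal corners $(i,\ell),(k,j)$; it is an inner interval of $\mathcal{P}$ if all its cells belong to $\mathcal{P}$. $I_{\mathcal{P}}$ is generated by the binomials $x_ax_b-x_cx_d$ for inner intervals $[a,b]$ with anti-diagonal corners $c,d$. A horizontal (resp.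 vertical) edge interval of $\mathcal{P}$ is a set of lattice points $\{(t,j):i\le t\le k\}$ (resp. $\{(i,t): j\le t\le k\}$) such that each pair of consecutive points forms an edge of some cell of $\mathcal{P}$. A zig-zag walk of $\mathcal{P}$ is a sequence of distinct inner intervals $I_1,\dots,I_\ell$ of $\mathcal{P}$ such that, for each $i$, $v_i,z_i$ are the diagonal (resp. anti-diagonal) corners and $u_i,v_{i+1}$ the anti-diagonal (resp. diagonal) corners of $I_i$, and: (Z1) $I_1\cap I_\ell=\{v_1\}=\{v_{\ell+1}\}$ and $I_i\cap I_{i+1}=\{v_{i+1}\}$ for $i=1,\dots,\ell-1$; (Z2) $v_i$ and $v_{i+1}$ lie on a common (horizontal or vertical) edge interval of $\mathcal{P}$ for $i=1,\dots,\ell$; (Z3) for $i\ne j$ in $\{1,\dots,\ell\}$ there is no inner interval of $\mathcal{P}$ containing both $z_i$ and $z_j$. *)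

theory Defs
  imports Main "HOL-Library.Poly_Mapping"
begin

type_synonym point = "nat \<times> nat"
(* a cell [a, a+(1,1)] is represented by its lower-left corner a *)
type_synonym cell = "nat \<times> nat"
(* polynomials over 'k in variables x_v, v a lattice point *)
type_synonym 'k lpoly = "(point \<Rightarrow>\<^sub>0 nat) \<Rightarrow>\<^sub>0 'k"

definition cell_vertices :: "cell \<Rightarrow> point set" where
  "cell_vertices a = {a, (fst a + 1, snd a), (fst a, snd a + 1), (fst a + 1, snd a + 1)}"

definition cells_adjacent :: "cell \<Rightarrow> cell \<Rightarrow> bool" where
  "cells_adjacent a b \<longleftrightarrow>
     (fst a = fst b \<and> (snd b = snd a + 1 \<or> snd a = snd b + 1)) \<or>
     (snd a = snd b \<and> (fst b = fst a + 1 \<or> fst a = fst b + 1))"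

definition polyomino :: "cell set \<Rightarrow> bool" where
  "polyomino P \<longleftrightarrow> finite P \<and> P \<noteq> {} \<and>
     (\<forall>a\<in>P. \<forall>b\<in>P. (\<lambda>c d. c \<in> P \<and> d \<in> P \<and> cells_adjacent c d)\<^sup>*\<^sup>* a b)"

definition vertex_set :: "cell set \<Rightarrow> point set" where
  "vertex_set P = (\<Union>a\<in>P. cell_vertices a)"

definition interval_pts :: "point \<Rightarrow> point \<Rightarrow> point set" where
  "interval_pts a b = {(p, q). fst a \<le> p \<and> p \<le> fst b \<and> snd a \<le> q \<and> q \<le> snd b}"

definition inner_interval :: "cell set \<Rightarrow> point \<Rightarrow> point \<Rightarrow> bool" where
  "inner_interval P a b \<longleftrightarrow> fst a < fst b \<and> snd a < snd b \<and>
     (\<forall>p q. fst a \<le> p \<and> p < fst b \<and> snd a \<le> q \<and> q < snd b \<longrightarrow> (p, q) \<in> P)"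

definition diag_corners :: "point \<Rightarrow> point \<Rightarrow> point set" where
  "diag_corners a b = {a, b}"

definition antidiag_corners :: "point \<Rightarrow> point \<Rightarrow> point set" where
  "antidiag_corners a b = {(fst a, snd b), (fst b, snd a)}"

definition var :: "point \<Rightarrow> 'k::comm_ring_1 lpoly" where
  "var v = Poly_Mapping.single (Poly_Mapping.single v 1) 1"

(* the polynomial ring S = K[x_v | v \<in> V(P)] as a subset of all polynomials *)
definition S_ring :: "cell set \<Rightarrow> 'k::comm_ring_1 lpoly set" where
  "S_ring P = {p :: 'k lpoly. \<forall>m \<in> Poly_Mapping.keys p. Poly_Mapping.keys m \<subseteq> vertex_set P}"

definition inner_binomials :: "cell set \<Rightarrow> 'k::comm_ring_1 lpoly set" where
  "inner_binomials P = {var a * var b - var (fst a, snd b) * var (fst b, snd a) | a b.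
                          inner_interval P a b}"

definition polyomino_ideal :: "cell set \<Rightarrow> 'k::comm_ring_1 lpoly set" where
  "polyomino_ideal P = {p. \<exists>G c. finite G \<and> G \<subseteq> inner_binomials P \<and>
                              (\<forall>g\<in>G. c g \<in> S_ring P) \<and> p = (\<Sum>g\<in>G. c g * g)}"

(* f is a zerodivisor of S/I: some element of S not in I is killed by f modulo I *)
definition zerodivisor_mod :: "'k::comm_ring_1 lpoly set \<Rightarrow> 'k lpoly set \<Rightarrow> 'k lpoly \<Rightarrow> bool" where
  "zerodivisor_mod R I f \<longleftrightarrow> (\<exists>g\<in>R. g \<notin> I \<and> f * g \<in> I)"

definition h_edge :: "cell set \<Rightarrow> point \<Rightarrow> bool" where  (* segment (t,j)-(t+1,j) *)
  "h_edge P p \<longleftrightarrow> p \<in> P \<or> (snd p > 0 \<and> (fst p, snd p - 1) \<in> P)"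

definition v_edge :: "cell set \<Rightarrow> point \<Rightarrow> bool" where  (* segment (i,t)-(i,t+1) *)
  "v_edge P p \<longleftrightarrow> p \<in> P \<or> (fst p > 0 \<and> (fst p - 1, snd p) \<in> P)"

definition h_edge_interval :: "cell set \<Rightarrow> point set \<Rightarrow> bool" where
  "h_edge_interval P E \<longleftrightarrow> (\<exists>i k j. i \<le> k \<and> E = {(t, j) | t. i \<le> t \<and> t \<le> k} \<and>
       (\<forall>t. i \<le> t \<and> t < k \<longrightarrow> h_edge P (t, j)))"

definition v_edge_interval :: "cell set \<Rightarrow> point set \<Rightarrow> bool" where
  "v_edge_interval P E \<longleftrightarrow> (\<exists>i j k. j \<le> k \<and> E = {(i, t) | t. j \<le> t \<and> t \<le> k} \<and>
       (\<forall>t. j \<le> t \<and> t < k \<longrightarrow> v_edge P (i, t)))"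

definition on_common_edge_interval :: "cell set \<Rightarrow> point \<Rightarrow> point \<Rightarrow> bool" where
  "on_common_edge_interval P p q \<longleftrightarrow>
     (\<exists>E. (h_edge_interval P E \<or> v_edge_interval P E) \<and> p \<in> E \<and> q \<in> E)"

(* Zig-zag walk I_1..I_l; interval I_i is given by its diagonal corners Ia i, Ib i;
   v, z, u are the corner labellings, indices 1..l, with v (l+1) = v 1. *)
definition zigzag_walk :: "cell set \<Rightarrow> nat \<Rightarrow> (nat \<Rightarrow> point) \<Rightarrow> (nat \<Rightarrow> point) \<Rightarrow>
     (nat \<Rightarrow> point) \<Rightarrow> (nat \<Rightarrow> point) \<Rightarrow> (nat \<Rightarrow> point) \<Rightarrow> bool" where
  "zigzag_walk P l Ia Ib v z u \<longleftrightarrow>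
     1 \<le> l \<and>
     (\<forall>i\<in>{1..l}. inner_interval P (Ia i) (Ib i)) \<and>
     (\<forall>i\<in>{1..l}. \<forall>j\<in>{1..l}. i \<noteq> j \<longrightarrow> (Ia i, Ib i) \<noteq> (Ia j, Ib j)) \<and>
     (\<forall>i\<in>{1..l}.
        ({v i, z i} = diag_corners (Ia i) (Ib i) \<and> {u i, v (i+1)} = antidiag_corners (Ia i) (Ib i)) \<or>
        ({v i, z i} = antidiag_corners (Ia i) (Ib i) \<and> {u i, v (i+1)} = diag_corners (Ia i) (Ib i))) \<and>
     \<comment> \<open>(Z1)\<close>
     interval_pts (Ia 1) (Ib 1) \<inter> interval_pts (Ia l) (Ib l) = {v 1} \<and> {v 1} = {v (l+1)} \<and>
     (\<forall>i. 1 \<le> i \<and> i \<le> l - 1 \<longrightarrow>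
        interval_pts (Ia i) (Ib i) \<inter> interval_pts (Ia (i+1)) (Ib (i+1)) = {v (i+1)}) \<and>
     \<comment> \<open>(Z2)\<close>
     (\<forall>i\<in>{1..l}. on_common_edge_interval P (v i) (v (i+1))) \<and>
     \<comment> \<open>(Z3)\<close>
     (\<forall>i\<in>{1..l}. \<forall>j\<in>{1..l}. i \<noteq> j \<longrightarrow>
        \<not> (\<exists>a b. inner_interval P a b \<and> z i \<in> interval_pts a b \<and> z j \<in> interval_pts a b))"

definition f_walk :: "nat \<Rightarrow> (nat \<Rightarrow> point) \<Rightarrow> (nat \<Rightarrow> point) \<Rightarrow> 'k::comm_ring_1 lpoly" where
  "f_walk l z u = (\<Prod>k=1..l. var (z k)) - (\<Prod>j=1..l. var (u j))"

end

theory Submission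
  imports Defs
begin

(* Each interval I_k of the walk contributes the binomial x_{v_k} x_{z_k} - x_{u_k} x_{v_{k+1}}
   (up to sign) to I_P. Telescoping these binomials once around the closed walk, starting and
   ending at v_i, gives x_{v_i} f_W in I_P. Neither factor lies in I_P: every monomial of an element
   of I_P is divisible by x_a x_b or x_c x_d for some inner interval [a,b] with anti-diagonal
   corners c, d. The linear monomial x_v is not, and by (Z3) neither is the monomial prod_k x_{z_k},
   which occurs in f_W because u_1 is none of the z_k. *)

lemma S_ring_add: "p \<in> S_ring P \<Longrightarrow> q \<in> S_ring P \<Longrightarrow> p + q \<in> S_ring P"
  using keys_add[of p q] unfolding S_ring_def by blast

lemma S_ring_diff: "p \<in> S_ring P \<Longrightarrow> q \<in> S_ring P \<Longrightarrow> p - q \<in> S_ring P"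
  using keys_diff[of p q] unfolding S_ring_def by blast

lemma S_ring_mult:
  assumes "p \<in> S_ring P" "q \<in> S_ring P"
  shows "p * q \<in> S_ring P"
proof -
  have "Poly_Mapping.keys m \<subseteq> vertex_set P" if m: "m \<in> Poly_Mapping.keys (p * q)" for m
  proof -
    obtain a b where "m = a + b" "a \<in> Poly_Mapping.keys p" "b \<in> Poly_Mapping.keys q"
      using keys_mult m by blast
    then show ?thesis
      using assms keys_add[of a b] unfolding S_ring_def by blast
  qed
  then show ?thesis
    unfolding S_ring_def by blast
qed

lemma S_ring_zero: "0 \<in> S_ring P"
  unfolding S_ring_def by simp

lemma S_ring_one: "1 \<in> S_ring P"
  unfolding S_ring_def by simp

lemma S_ring_prod: "(\<And>k. k \<in> K \<Longrightarrow> f k \<in> S_ring P) \<Longrightarrow> prod f K \<in> S_ring P"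
  by (induction K rule: infinite_finite_induct) (auto simp: S_ring_one S_ring_mult)

lemma var_in_S_ring: "w \<in> vertex_set P \<Longrightarrow> var w \<in> S_ring P"
  unfolding S_ring_def var_def by simp

lemma polyomino_ideal_add:
  assumes "p \<in> polyomino_ideal P" "q \<in> polyomino_ideal P"
  shows "p + q \<in> polyomino_ideal P"
proof -
  obtain G c where G: "finite G" "G \<subseteq> inner_binomials P" "\<forall>g\<in>G. c g \<in> S_ring P"
    and p: "p = (\<Sum>g\<in>G. c g * g)"
    using assms(1) unfolding polyomino_ideal_def by blast
  obtain H d where H: "finite H" "H \<subseteq> inner_binomials P" "\<forall>g\<in>H. d g \<in> S_ring P"
    and q: "q = (\<Sum>g\<in>H. d g * g)"
    using assms(2) unfolding polyomino_ideal_def by blast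
  define c' where "c' g = (if g \<in> G then c g else 0)" for g
  define d' where "d' g = (if g \<in> H then d g else 0)" for g
  have "(\<Sum>g\<in>G \<union> H. c' g * g) = p"
    unfolding p c'_def by (rule sum.mono_neutral_cong_right) (use G H in auto)
  moreover have "(\<Sum>g\<in>G \<union> H. d' g * g) = q"
    unfolding q d'_def by (rule sum.mono_neutral_cong_right) (use G H in auto)
  ultimately have "p + q = (\<Sum>g\<in>G \<union> H. (c' g + d' g) * g)"
    by (simp add: distrib_right sum.distrib)
  moreover have "c' g + d' g \<in> S_ring P" for g
    using G(3) H(3) S_ring_zero unfolding c'_def d'_def by (intro S_ring_add) auto
  ultimately show ?thesis
    unfolding polyomino_ideal_def
    by (intro CollectI exI[of _ "G \<union> H"] exI[of _ "\<lambda>g. c' g + d' g"]) (use G H in auto)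
qed

lemma polyomino_ideal_mult:
  assumes "r \<in> S_ring P" "p \<in> polyomino_ideal P"
  shows "r * p \<in> polyomino_ideal P"
proof -
  obtain G c where G: "finite G" "G \<subseteq> inner_binomials P" "\<forall>g\<in>G. c g \<in> S_ring P"
    and p: "p = (\<Sum>g\<in>G. c g * g)"
    using assms(2) unfolding polyomino_ideal_def by blast
  have "r * p = (\<Sum>g\<in>G. (r * c g) * g)"
    unfolding p by (simp add: sum_distrib_left mult.assoc)
  moreover have "\<forall>g\<in>G. r * c g \<in> S_ring P"
    using G(3) assms(1) by (auto intro: S_ring_mult)
  ultimately show ?thesis
    unfolding polyomino_ideal_def
    by (intro CollectI exI[of _ G] exI[of _ "\<lambda>g. r * c g"]) (use G in auto)
qed

lemma polyomino_ideal_uminus: "p \<in> polyomino_ideal P \<Longrightarrow> - p \<in> polyomino_ideal P"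
  using polyomino_ideal_mult[of "- 1"] by (simp add: S_ring_def)

lemma zero_in_polyomino_ideal: "0 \<in> polyomino_ideal P"
  unfolding polyomino_ideal_def by (intro CollectI exI[of _ "{}"]) simp

lemma inner_binomial_in_polyomino_ideal:
  assumes "inner_interval P a b"
  shows "var a * var b - var (fst a, snd b) * var (fst b, snd a) \<in> polyomino_ideal P"
proof -
  let ?g = "var a * var b - var (fst a, snd b) * var (fst b, snd a)"
  have "?g \<in> inner_binomials P"
    unfolding inner_binomials_def using assms by blast
  then show ?thesis
    unfolding polyomino_ideal_def
    by (intro CollectI exI[of _ "{?g}"] exI[of _ "\<lambda>_. 1"]) (simp add: S_ring_one)
qed

lemma inner_interval_corners_in_vertex_set:
  assumes "inner_interval P a b"
  shows "diag_corners a b \<union> antidiag_corners a b \<subseteq> vertex_set P"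
proof -
  obtain a1 a2 b1 b2 where ab: "a = (a1, a2)" "b = (b1, b2)"
    by (cases a, cases b) auto
  have lt: "a1 < b1" "a2 < b2"
    using assms ab unfolding inner_interval_def by auto
  have "(p, q) \<in> P" if "a1 \<le> p" "p < b1" "a2 \<le> q" "q < b2" for p q
    using assms ab that unfolding inner_interval_def by auto
  then have "(a1, a2) \<in> P" "(b1 - 1, b2 - 1) \<in> P" "(a1, b2 - 1) \<in> P" "(b1 - 1, a2) \<in> P"
    using lt by simp_all
  moreover have "(a1, a2) \<in> cell_vertices (a1, a2)" "(b1, b2) \<in> cell_vertices (b1 - 1, b2 - 1)"
    "(a1, b2) \<in> cell_vertices (a1, b2 - 1)" "(b1, a2) \<in> cell_vertices (b1 - 1, a2)"
    using lt unfolding cell_vertices_def by auto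
  ultimately show ?thesis
    unfolding ab vertex_set_def diag_corners_def antidiag_corners_def by auto
qed

lemma inner_interval_corners_in_interval_pts:
  "inner_interval P a b \<Longrightarrow> diag_corners a b \<union> antidiag_corners a b \<subseteq> interval_pts a b"
  by (auto simp: inner_interval_def interval_pts_def diag_corners_def antidiag_corners_def)

lemma inner_interval_corners_distinct:
  assumes "inner_interval P a b"
  shows "a \<noteq> b" "(fst a, snd b) \<noteq> (fst b, snd a)"
    and "diag_corners a b \<inter> antidiag_corners a b = {}"
  using assms by (cases a; cases b; auto simp: inner_interval_def diag_corners_def antidiag_corners_def)+

lemma
  assumes "zigzag_walk P l Ia Ib v z u"
  shows zigzag_walk_length_pos: "1 \<le> l"
    and zigzag_walk_inner_interval: "i \<in> {1..l} \<Longrightarrow> inner_interval P (Ia i) (Ib i)"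
    and zigzag_walk_corner_labels: "i \<in> {1..l} \<Longrightarrow>
      ({v i, z i} = diag_corners (Ia i) (Ib i) \<and> {u i, v (Suc i)} = antidiag_corners (Ia i) (Ib i)) \<or>
      ({v i, z i} = antidiag_corners (Ia i) (Ib i) \<and> {u i, v (Suc i)} = diag_corners (Ia i) (Ib i))"
    and zigzag_walk_closed: "v (Suc l) = v 1"
  using assms unfolding zigzag_walk_def by simp_all

lemma zigzag_walk_z_separated:
  assumes "zigzag_walk P l Ia Ib v z u" "i \<in> {1..l}" "j \<in> {1..l}" "i \<noteq> j"
    and "inner_interval P a b" "z i \<in> interval_pts a b"
  shows "z j \<notin> interval_pts a b"
proof -
  have "\<forall>i\<in>{1..l}. \<forall>j\<in>{1..l}. i \<noteq> j \<longrightarrow>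
      \<not> (\<exists>a b. inner_interval P a b \<and> z i \<in> interval_pts a b \<and> z j \<in> interval_pts a b)"
    using assms(1) unfolding zigzag_walk_def by (elim conjE) assumption
  then show ?thesis
    using assms(2-6) by blast
qed

lemma zigzag_walk_corners:
  assumes "zigzag_walk P l Ia Ib v z u" "i \<in> {1..l}"
  shows "{v i, z i, u i, v (Suc i)} = diag_corners (Ia i) (Ib i) \<union> antidiag_corners (Ia i) (Ib i)"
  using zigzag_walk_corner_labels[OF assms] by auto

lemma zigzag_walk_corners_in_vertex_set:
  assumes "zigzag_walk P l Ia Ib v z u" "i \<in> {1..l}"
  shows "{v i, z i, u i, v (Suc i)} \<subseteq> vertex_set P"
  unfolding zigzag_walk_corners[OF assms]
  using zigzag_walk_inner_interval[OF assms] by (rule inner_interval_corners_in_vertex_set)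

lemma zigzag_walk_u_notin_z:
  assumes walk: "zigzag_walk P l Ia Ib v z u" and i: "i \<in> {1..l}"
  shows "u i \<notin> z ` {1..l}"
proof
  assume "u i \<in> z ` {1..l}"
  then obtain k where k: "k \<in> {1..l}" "u i = z k"
    by blast
  have inner: "inner_interval P (Ia i) (Ib i)"
    using zigzag_walk_inner_interval[OF walk i] .
  have "{v i, z i} \<inter> {u i, v (Suc i)} = {}"
    using zigzag_walk_corner_labels[OF walk i] inner_interval_corners_distinct(3)[OF inner]
    by (metis Int_commute)
  then have "z i \<noteq> u i"
    by blast
  then have "i \<noteq> k"
    using k by auto
  moreover have "z i \<in> interval_pts (Ia i) (Ib i)" "u i \<in> interval_pts (Ia i) (Ib i)"
    using zigzag_walk_corners[OF walk i] inner_interval_corners_in_interval_pts[OF inner] by blast+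
  ultimately show False
    using zigzag_walk_z_separated[OF walk i k(1) _ inner] k(2) by simp
qed

lemma zigzag_walk_binomial_in_polyomino_ideal:
  assumes walk: "zigzag_walk P l Ia Ib v z u" and i: "i \<in> {1..l}"
  shows "(var (v i) * var (z i) - var (u i) * var (v (Suc i)) :: 'k::comm_ring_1 lpoly)
    \<in> polyomino_ideal P"
proof -
  let ?a = "Ia i" and ?b = "Ib i"
  let ?diag = "var ?a * var ?b :: 'k lpoly"
    and ?antidiag = "var (fst ?a, snd ?b) * var (fst ?b, snd ?a) :: 'k lpoly"
  have bin: "?diag - ?antidiag \<in> polyomino_ideal P"
    using zigzag_walk_inner_interval[OF walk i] by (rule inner_binomial_in_polyomino_ideal)
  have var_mult_doubleton: "var x * var y = (var p * var q :: 'k lpoly)"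
    if "{x, y} = {p, q}" for x y p q
    using that by (auto simp: doubleton_eq_iff mult.commute)
  from zigzag_walk_corner_labels[OF walk i, unfolded diag_corners_def antidiag_corners_def]
  show ?thesis
  proof
    assume "{v i, z i} = {?a, ?b} \<and> {u i, v (Suc i)} = {(fst ?a, snd ?b), (fst ?b, snd ?a)}"
    then have "var (v i) * var (z i) = ?diag" "var (u i) * var (v (Suc i)) = ?antidiag"
      by (blast intro: var_mult_doubleton)+
    then show ?thesis
      using bin by (simp only:)
  next
    assume "{v i, z i} = {(fst ?a, snd ?b), (fst ?b, snd ?a)} \<and> {u i, v (Suc i)} = {?a, ?b}"
    then have "var (v i) * var (z i) = ?antidiag" "var (u i) * var (v (Suc i)) = ?diag"
      by (blast intro: var_mult_doubleton)+
    then show ?thesis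
      using polyomino_ideal_uminus[OF bin] by (simp only: minus_diff_eq)
  qed
qed

lemma telescoping_binomials_in_polyomino_ideal:
  fixes w z u :: "nat \<Rightarrow> point"
  assumes "a \<le> b"
    and binomial: "\<And>k. a \<le> k \<Longrightarrow> k < b \<Longrightarrow>
      (var (w k) * var (z k) - var (u k) * var (w (Suc k)) :: 'k::comm_ring_1 lpoly)
        \<in> polyomino_ideal P"
    and z_in_S: "\<And>k. a \<le> k \<Longrightarrow> k < b \<Longrightarrow> (var (z k) :: 'k lpoly) \<in> S_ring P"
    and u_in_S: "\<And>k. a \<le> k \<Longrightarrow> k < b \<Longrightarrow> (var (u k) :: 'k lpoly) \<in> S_ring P"
  shows "(var (w a) * (\<Prod>k\<in>{a..<b}. var (z k)) - (\<Prod>k\<in>{a..<b}. var (u k)) * var (w b) :: 'k lpoly)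
    \<in> polyomino_ideal P"
  using assms(1)
proof (induction b rule: dec_induct)
  case base
  show ?case
    using zero_in_polyomino_ideal by simp
next
  case (step n)
  let ?Z = "\<Prod>k\<in>{a..<n}. var (z k) :: 'k lpoly" and ?U = "\<Prod>k\<in>{a..<n}. var (u k) :: 'k lpoly"
  have "?U \<in> S_ring P"
    using step.hyps u_in_S by (intro S_ring_prod) simp
  then have "var (z n) * (var (w a) * ?Z - ?U * var (w n))
      + ?U * (var (w n) * var (z n) - var (u n) * var (w (Suc n))) \<in> polyomino_ideal P"
    using step binomial z_in_S by (intro polyomino_ideal_add polyomino_ideal_mult) simp_all
  moreover have "var (z n) * (var (w a) * ?Z - ?U * var (w n))
      + ?U * (var (w n) * var (z n) - var (u n) * var (w (Suc n)))
    = var (w a) * (\<Prod>k\<in>{a..<Suc n}. var (z k)) - (\<Prod>k\<in>{a..<Suc n}. var (u k)) * var (w (Suc n))"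
    using step.hyps by (simp add: prod.atLeastLessThan_Suc algebra_simps)
  ultimately show ?case
    by simp
qed

lemma zigzag_walk_var_mult_f_walk_in_polyomino_ideal:
  assumes walk: "zigzag_walk P l Ia Ib v z u" and i: "i \<in> {1..l}"
  shows "(var (v i) * f_walk l z u :: 'k::comm_ring_1 lpoly) \<in> polyomino_ideal P"
proof -
  have corner_vars_in_S: "var (z k) \<in> S_ring P" "var (u k) \<in> S_ring P" if "1 \<le> k" "k \<le> l" for k
    using zigzag_walk_corners_in_vertex_set[OF walk] that by (simp_all add: var_in_S_ring)
  have walk_segment: "(var (v a) * (\<Prod>k\<in>{a..<b}. var (z k))
      - (\<Prod>k\<in>{a..<b}. var (u k)) * var (v b) :: 'k lpoly) \<in> polyomino_ideal P"
    if "1 \<le> a" "a \<le> b" "b \<le> Suc l" for a b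
    using that by (intro telescoping_binomials_in_polyomino_ideal
        zigzag_walk_binomial_in_polyomino_ideal[OF walk] corner_vars_in_S) simp_all
  let ?Z1 = "\<Prod>k\<in>{1..<i}. var (z k) :: 'k lpoly" and ?Z2 = "\<Prod>k\<in>{i..<Suc l}. var (z k) :: 'k lpoly"
  let ?U1 = "\<Prod>k\<in>{1..<i}. var (u k) :: 'k lpoly" and ?U2 = "\<Prod>k\<in>{i..<Suc l}. var (u k) :: 'k lpoly"
  \<comment> \<open>go around the closed walk: from \<open>v i\<close> to \<open>v (Suc l) = v 1\<close>,
    then from \<open>v 1\<close> back to \<open>v i\<close>\<close>
  have "var (v i) * ?Z2 - ?U2 * var (v 1) \<in> polyomino_ideal P"
    using walk_segment[of i "Suc l"] i zigzag_walk_closed[OF walk] by simp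
  moreover have "var (v 1) * ?Z1 - ?U1 * var (v i) \<in> polyomino_ideal P"
    using walk_segment[of 1 i] i by simp
  moreover have "?Z1 \<in> S_ring P" "?U2 \<in> S_ring P"
    using i by (intro S_ring_prod corner_vars_in_S; simp)+
  ultimately have "?Z1 * (var (v i) * ?Z2 - ?U2 * var (v 1))
      + ?U2 * (var (v 1) * ?Z1 - ?U1 * var (v i)) \<in> polyomino_ideal P"
    by (intro polyomino_ideal_add polyomino_ideal_mult)
  moreover have "prod g {1..l} = prod g {1..<i} * prod g {i..<Suc l}" for g :: "nat \<Rightarrow> 'k lpoly"
    using i by (subst prod.atLeastLessThan_concat) (auto simp: atLeastLessThanSuc_atLeastAtMost)
  ultimately show ?thesis
    unfolding f_walk_def by (simp add: algebra_simps)
qed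

lemma lookup_mult_var_eq_zero:
  assumes "Poly_Mapping.lookup m w = 0"
  shows "Poly_Mapping.lookup (c * var w :: 'k::comm_ring_1 lpoly) m = 0"
proof (rule ccontr)
  assume "Poly_Mapping.lookup (c * var w) m \<noteq> 0"
  then have "m \<in> Poly_Mapping.keys (c * var w)"
    by (simp add: in_keys_iff)
  then obtain m' where "m = m' + Poly_Mapping.single w 1"
    using keys_mult[of c "var w"] by (auto simp: var_def)
  then show False
    using assms by (simp add: lookup_add)
qed

lemma lookup_polyomino_ideal_eq_zero:
  fixes m :: "point \<Rightarrow>\<^sub>0 nat" and p :: "'k::comm_ring_1 lpoly"
  assumes not_divisible: "\<And>a b. inner_interval P a b \<Longrightarrow>
      (Poly_Mapping.lookup m a = 0 \<or> Poly_Mapping.lookup m b = 0) \<and>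
      (Poly_Mapping.lookup m (fst a, snd b) = 0 \<or> Poly_Mapping.lookup m (fst b, snd a) = 0)"
    and "p \<in> polyomino_ideal P"
  shows "Poly_Mapping.lookup p m = 0"
proof -
  obtain G c where G: "G \<subseteq> inner_binomials P" and p: "p = (\<Sum>g\<in>G. c g * g)"
    using assms(2) unfolding polyomino_ideal_def by blast
  have lookup_var_mult_var: "Poly_Mapping.lookup (c' * (var x * var y) :: 'k lpoly) m = 0"
    if "Poly_Mapping.lookup m x = 0 \<or> Poly_Mapping.lookup m y = 0" for c' x y
    using that lookup_mult_var_eq_zero[of m x "c' * var y"]
      lookup_mult_var_eq_zero[of m y "c' * var x"]
    by (auto simp: ac_simps)
  have "Poly_Mapping.lookup (c g * g) m = 0" if g: "g \<in> G" for g
  proof -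
    obtain a b where "inner_interval P a b"
      and "g = var a * var b - var (fst a, snd b) * var (fst b, snd a)"
      using G g unfolding inner_binomials_def by blast
    then show ?thesis
      using not_divisible lookup_var_mult_var by (simp add: right_diff_distrib lookup_minus)
  qed
  then show ?thesis
    unfolding p lookup_sum by simp
qed

lemma var_notin_polyomino_ideal: "(var w :: 'k::comm_ring_1 lpoly) \<notin> polyomino_ideal P"
proof
  let ?m = "Poly_Mapping.single w (1::nat)"
  assume in_ideal: "(var w :: 'k lpoly) \<in> polyomino_ideal P"
  have single_zero: "Poly_Mapping.lookup ?m x = 0 \<or> Poly_Mapping.lookup ?m y = 0" if "x \<noteq> y" for x y
    using that by (simp add: lookup_single when_def)
  have "Poly_Mapping.lookup (var w :: 'k lpoly) ?m = 0"
    by (rule lookup_polyomino_ideal_eq_zero[OF _ in_ideal])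
      (metis single_zero inner_interval_corners_distinct(1,2))
  then show False
    by (simp add: var_def)
qed

lemma prod_var_eq_single:
  "(\<Prod>k\<in>K. var (f k)) =
    (Poly_Mapping.single (\<Sum>k\<in>K. Poly_Mapping.single (f k) 1) 1 :: 'k::comm_ring_1 lpoly)"
proof (induction K rule: infinite_finite_induct)
  case (insert k K)
  then show ?case
    by (simp add: var_def mult_single add.commute)
qed (simp_all add: one_poly_mapping.abs_eq)

lemma lookup_sum_single_eq_zero_iff:
  assumes "finite K"
  shows "Poly_Mapping.lookup (\<Sum>k\<in>K. Poly_Mapping.single (f k) (1::nat)) x = 0 \<longleftrightarrow> x \<notin> f ` K"
  using assms by (auto simp: lookup_sum lookup_single when_def)

lemma zigzag_walk_f_walk_notin_polyomino_ideal:
  assumes walk: "zigzag_walk P l Ia Ib v z u"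
  shows "(f_walk l z u :: 'k::comm_ring_1 lpoly) \<notin> polyomino_ideal P"
proof
  define mz where "mz = (\<Sum>k\<in>{1..l}. Poly_Mapping.single (z k) (1::nat))"
  define mu where "mu = (\<Sum>k\<in>{1..l}. Poly_Mapping.single (u k) (1::nat))"
  assume in_ideal: "(f_walk l z u :: 'k lpoly) \<in> polyomino_ideal P"
  have mz_separated: "Poly_Mapping.lookup mz x = 0 \<or> Poly_Mapping.lookup mz y = 0"
    if ab: "inner_interval P a b" and "x \<noteq> y" "x \<in> interval_pts a b" "y \<in> interval_pts a b"
    for a b x y
  proof (rule ccontr)
    assume "\<not> ?thesis"
    then obtain i j where "i \<in> {1..l}" "j \<in> {1..l}" "x = z i" "y = z j"
      unfolding mz_def lookup_sum_single_eq_zero_iff[OF finite_atLeastAtMost] by blast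
    then show False
      using that zigzag_walk_z_separated[OF walk _ _ _ ab] by metis
  qed
  have "Poly_Mapping.lookup (f_walk l z u :: 'k lpoly) mz = 0"
  proof (rule lookup_polyomino_ideal_eq_zero[OF _ in_ideal])
    fix a b
    assume ab: "inner_interval P a b"
    then have "{a, b, (fst a, snd b), (fst b, snd a)} \<subseteq> interval_pts a b"
      using inner_interval_corners_in_interval_pts unfolding diag_corners_def antidiag_corners_def
      by blast
    then show "(Poly_Mapping.lookup mz a = 0 \<or> Poly_Mapping.lookup mz b = 0) \<and>
        (Poly_Mapping.lookup mz (fst a, snd b) = 0 \<or> Poly_Mapping.lookup mz (fst b, snd a) = 0)"
      using mz_separated[OF ab] inner_interval_corners_distinct(1,2)[OF ab] by simp
  qed
  moreover have "mu \<noteq> mz"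
  proof
    assume "mu = mz"
    have "1 \<in> {1..l}"
      using zigzag_walk_length_pos[OF walk] by simp
    then have "Poly_Mapping.lookup mu (u 1) \<noteq> 0" "Poly_Mapping.lookup mz (u 1) = 0"
      using zigzag_walk_u_notin_z[OF walk]
      unfolding mu_def mz_def lookup_sum_single_eq_zero_iff[OF finite_atLeastAtMost] by auto
    then show False
      using \<open>mu = mz\<close> by simp
  qed
  ultimately show False
    unfolding f_walk_def prod_var_eq_single mz_def[symmetric] mu_def[symmetric]
    by (simp add: lookup_minus lookup_single)
qed

theorem proposition3p5:
  fixes P :: "cell set" and l :: nat and Ia Ib v z u :: "nat \<Rightarrow> point"
  assumes "polyomino P"
    and "zigzag_walk P l Ia Ib v z u"
  shows "(\<forall>i\<in>{1..l}. zerodivisor_mod (S_ring P) (polyomino_ideal P) (var (v i) :: 'k::field lpoly))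
       \<and> zerodivisor_mod (S_ring P) (polyomino_ideal P) (f_walk l z u :: 'k::field lpoly)
       \<and> (\<forall>i\<in>{1..l}. (var (v i) * f_walk l z u :: 'k::field lpoly) \<in> polyomino_ideal P)"
proof -
  note walk = assms(2)
  let ?I = "polyomino_ideal P :: 'k lpoly set" and ?f = "f_walk l z u :: 'k lpoly"
  have one: "1 \<in> {1..l}"
    using zigzag_walk_length_pos[OF walk] by simp
  have annihilates: "\<forall>i\<in>{1..l}. var (v i) * ?f \<in> ?I"
    using zigzag_walk_var_mult_f_walk_in_polyomino_ideal[OF walk] by blast
  have "?f \<in> S_ring P"
    using zigzag_walk_corners_in_vertex_set[OF walk] unfolding f_walk_def
    by (intro S_ring_diff S_ring_prod var_in_S_ring) auto
  then have var_zerodivisor: "zerodivisor_mod (S_ring P) ?I (var (v i))" if "i \<in> {1..l}" for i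
    using annihilates that zigzag_walk_f_walk_notin_polyomino_ideal[OF walk]
    unfolding zerodivisor_mod_def by blast
  have "var (v 1) \<in> S_ring P"
    using zigzag_walk_corners_in_vertex_set[OF walk one] by (simp add: var_in_S_ring)
  then have "zerodivisor_mod (S_ring P) ?I ?f"
    using annihilates one var_notin_polyomino_ideal[of "v 1"]
    unfolding zerodivisor_mod_def by (metis mult.commute)
  then show ?thesis
    using var_zerodivisor annihilates by blast
qed

end
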